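(* Consider the FlexPD-C iterates described in the context with $\beta>0$, integer $T\ge1$ and $0<\alpha<1/\rho(B)$, and let $C=\sum_{t=0}^{T-1}(I-\alpha B)^t$, $M=C^{-1}(I-\alpha B)^T$, $N=\frac{1}{\alpha}(C^{-1}-M)$. Then for any $\eta_4>0$ and every $k\ge0$, \[\|x^{k+1}-x^*\|_{P_C}^2+\|x^{k+1}-x^k\|_{Q_C}^2\le\|x^k-x^*\|_M^2-\|x^{k+1}-x^*\|_M^2+\frac{\alpha}{\beta}\Big(\|\lambda^k-\lambda^*\|^2-\|\lambda^{k+1}-\lambda^*\|^2\Big),\] where $P_C=2\alpha mI-\alpha\eta_4I+2\alpha N-\alpha\beta A'A$ and $Q_C=M-\frac{\alpha L^2}{\eta_4}I$.
   Context: Setting: $n$ agents are connected by a connected undirected graph with edge set $\mathcal E$, $\epsilon=|\mathcal E|$. For $x\in\mathbb R^n$ let $f(x)=\sum_{i=1}^n f_i(x_i)$, where each $f_i:\mathbb R\to\mathbb R$ is twice differentiable with $m\le f_i''\le L$ for constants $0<m\le L$; $\nabla f(x)=(f_1'(x_1),\dots,f_n'(x_n))'$. $A\in\mathbb R^{\epsilon\times n}$ is the edge–node incidence matrix (null space spanned by the all-ones vector). $B\in\mathbb R^{n\times n}$ is symmetric positive semidefinite with the same null space as $A$, off-diagonal entries nonzero only on edges; $\rho(B)$ is its largest eigenvalue. $x^*$ is the unique minimizer of $f$ subject to $Ax=0$ and $\lambda^*$ a Lagrange multiplier with $\nabla f(x^* )+A'\lambda^*=0$, $Ax^*=0$, $Bx^*=0$,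 chosen in the column space of $A$. FlexPD-C: given $\alpha,\beta>0$, $T\ge1$, $x^0$ arbitrary, $\lambda^0=0$; for $k\ge0$: $x^{k+1,0}=x^k$; for $t=1,\dots,T$, $x^{k+1,t}=x^{k+1,t-1}-\alpha\nabla f(x^k)-\alpha A'\lambda^k-\alpha Bx^{k+1,t-1}$; then $x^{k+1}=x^{k+1,T}$, $\lambda^{k+1}=\lambda^k+\beta Ax^{k+1}$. Notation: $\|v\|_S^2:=v'Sv$ for any symmetric $S$; $\|\cdot\|$ Euclidean norm. *)

theory Defs
  imports "HOL-Analysis.Analysis"
begin

text \<open>Matrix power (note: the ring power on vec is componentwise, so we define our own).\<close>
definition matpow :: "real^'n^'n \<Rightarrow> nat \<Rightarrow> real^'n^'n" where
  "matpow S t = ((\<lambda>Z. S ** Z) ^^ t) (mat 1)"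

definition sqnorm :: "real^'n^'n \<Rightarrow> real^'n \<Rightarrow> real" where
  "sqnorm S v = v \<bullet> (S *v v)"

definition largest_eig :: "real^'n^'n \<Rightarrow> real" where
  "largest_eig S = Max {l. \<exists>v. v \<noteq> 0 \<and> S *v v = l *\<^sub>R v}"

text \<open>Edge-node incidence matrix of a graph whose edges (indexed by type 'e) have
  endpoints src e and dst e (orientation arbitrary).\<close>
definition incidence :: "('e \<Rightarrow> 'n) \<Rightarrow> ('e \<Rightarrow> 'n) \<Rightarrow> real^'n^'e" where
  "incidence src dst = (\<chi> e i. if i = src e then 1 else if i = dst e then -1 else 0)"

definition adjacent :: "('e \<Rightarrow> 'n) \<Rightarrow> ('e \<Rightarrow> 'n) \<Rightarrow> 'n \<Rightarrow> 'n \<Rightarrow> bool" where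
  "adjacent src dst i j \<longleftrightarrow> (\<exists>e. (src e = i \<and> dst e = j) \<or> (src e = j \<and> dst e = i))"

definition simple_graph :: "('e \<Rightarrow> 'n) \<Rightarrow> ('e \<Rightarrow> 'n) \<Rightarrow> bool" where
  "simple_graph src dst \<longleftrightarrow> (\<forall>e. src e \<noteq> dst e) \<and>
     (\<forall>e e'. {src e, dst e} = {src e', dst e'} \<longrightarrow> e = e')"

definition connected_graph :: "('e \<Rightarrow> 'n) \<Rightarrow> ('e \<Rightarrow> 'n) \<Rightarrow> bool" where
  "connected_graph src dst \<longleftrightarrow> (\<forall>i j. (adjacent src dst)\<^sup>*\<^sup>* i j)"

definition grad :: "('n \<Rightarrow> real \<Rightarrow> real) \<Rightarrow> real^'n \<Rightarrow> real^'n" where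
  "grad f' x = (\<chi> i. f' i (x $ i))"

fun flexpd :: "(real^'n \<Rightarrow> real^'n) \<Rightarrow> real^'n^'e \<Rightarrow> real^'n^'n \<Rightarrow> real \<Rightarrow> real \<Rightarrow> nat
    \<Rightarrow> real^'n \<Rightarrow> nat \<Rightarrow> (real^'n) \<times> (real^'e)" where
  "flexpd g A B \<alpha> \<beta> T x0 0 = (x0, 0)"
| "flexpd g A B \<alpha> \<beta> T x0 (Suc k) =
     (let (x, l) = flexpd g A B \<alpha> \<beta> T x0 k;
          x' = ((\<lambda>z. z - \<alpha> *\<^sub>R g x - \<alpha> *\<^sub>R (transpose A *v l) - \<alpha> *\<^sub>R (B *v z)) ^^ T) x
      in (x', l + \<beta> *\<^sub>R (A *v x')))"

end

theory Submission
  imports Defs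
begin

text \<open>
  With \<open>W = I - \<alpha> B\<close> the \<open>T\<close> inner steps form an affine iteration, so
  \<open>x\<^sup>k\<^sup>+\<^sup>1 = W\<^sup>T x\<^sup>k - \<alpha> C (\<nabla>f(x\<^sup>k) + A' \<lambda>\<^sup>k)\<close> (a matrix power, not a
  transpose), i.e.
  \<open>C\<^sup>-\<^sup>1 x\<^sup>k\<^sup>+\<^sup>1 = M x\<^sup>k - \<alpha> (\<nabla>f(x\<^sup>k) + A' \<lambda>\<^sup>k)\<close>.
  Since \<open>\<alpha> \<rho>(B) < 1\<close>, \<open>W\<close> is positive semidefinite, so \<open>C \<ge> I\<close> is invertible, and
  \<open>C\<^sup>-\<^sup>1\<close> and \<open>M\<close> are symmetric because all matrices involved are polynomials in \<open>W\<close>.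
  Subtracting the same relation at the fixed point \<open>(x\<^sup>*, \<lambda>\<^sup>*)\<close> and pairing it with
  \<open>x\<^sup>k\<^sup>+\<^sup>1 - x\<^sup>*\<close> yields an exact identity between the \<open>M\<close>-weighted primal errors,
  the dual errors and \<open>2 \<alpha> \<langle>x\<^sup>k\<^sup>+\<^sup>1 - x\<^sup>*, \<nabla>f(x\<^sup>k) - \<nabla>f(x\<^sup>*)\<rangle>\<close>.
  Splitting the gradient difference at \<open>x\<^sup>k\<^sup>+\<^sup>1\<close>, strong monotonicity (\<open>f\<^sub>i'' \<ge> m\<close>)
  bounds one part and Young's inequality with weight \<open>\<eta>\<^sub>4\<close> together with the Lipschitz
  bound (\<open>f\<^sub>i'' \<le> L\<close>) the other.
\<close>

section \<open>Matrix algebra\<close>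

lemma transpose_zero [simp]: "transpose 0 = 0"
  by (simp add: transpose_def vec_eq_iff)

lemma transpose_add: "transpose (X + Y) = transpose X + transpose (Y :: 'a::plus^'n^'m)"
  by (simp add: transpose_def vec_eq_iff)

lemma transpose_diff: "transpose (X - Y) = transpose X - transpose (Y :: 'a::minus^'n^'m)"
  by (simp add: transpose_def vec_eq_iff)

lemma transpose_sum:
  "transpose (\<Sum>t\<in>F. X t) = (\<Sum>t\<in>F. transpose (X t :: 'a::comm_monoid_add^'n^'m))"
  by (induction F rule: infinite_finite_induct) (simp_all add: transpose_add)

lemma matrix_add_rdistrib: "(X + Y) ** Z = X ** Z + Y ** (Z :: 'a::semiring_1^'n^'m)"
  by (simp add: matrix_matrix_mult_def vec_eq_iff sum.distrib distrib_right)

lemma sum_matrix_mult: "(\<Sum>t\<in>F. X t) ** (Z :: 'a::semiring_1^'n^'m) = (\<Sum>t\<in>F. X t ** Z)"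
  by (induction F rule: infinite_finite_induct) (simp_all add: matrix_add_rdistrib)

lemma matrix_mult_sum: "(Z :: 'a::semiring_1^'n^'m) ** (\<Sum>t\<in>F. X t) = (\<Sum>t\<in>F. Z ** X t)"
  by (induction F rule: infinite_finite_induct) (simp_all add: matrix_add_ldistrib)

lemma sum_matrix_vector_mult: "(\<Sum>t\<in>F. X t) *v (v :: 'a::semiring_1^'n) = (\<Sum>t\<in>F. X t *v v)"
  by (induction F rule: infinite_finite_induct) (simp_all add: matrix_vector_mult_add_rdistrib)

lemma inner_matrix_vector_symmetric:
  "transpose S = S \<Longrightarrow> x \<bullet> (S *v y) = (S *v x) \<bullet> (y :: real^'n)"
  by (metis dot_lmul_matrix transpose_matrix_vector)

lemma matpow_0 [simp]: "matpow S 0 = mat 1"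
  by (simp add: matpow_def)

lemma matpow_Suc: "matpow S (Suc t) = S ** matpow S t"
  by (simp add: matpow_def)

lemma matpow_add: "matpow S (s + t) = matpow S s ** matpow S t"
  by (induction s) (simp_all add: matpow_Suc matrix_mul_assoc)

lemma matpow_commute: "matpow S s ** matpow S t = matpow S t ** matpow S s"
  by (metis matpow_add add.commute)

lemma matpow_Suc': "matpow S (Suc t) = matpow S t ** S"
  using matpow_add[of S t 1] by (simp add: matpow_Suc)

lemma transpose_matpow: "transpose (matpow S t) = matpow (transpose S) t"
  by (induction t) (simp, metis matpow_Suc matpow_Suc' matrix_transpose_mul)

lemma matpow_fixed_vector: "S *v v = v \<Longrightarrow> matpow S t *v v = v"
  by (induction t) (simp_all add: matpow_Suc matrix_vector_mul_assoc[symmetric])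

lemma funpow_affine_closed_form:
  "((\<lambda>z. S *v z - c) ^^ t) x = matpow S t *v x - (\<Sum>s<t. matpow S s) *v c"
proof (induction t)
  case (Suc t)
  have "(\<Sum>s<Suc t. matpow S s) = mat 1 + S ** (\<Sum>s<t. matpow S s)"
    unfolding sum.lessThan_Suc_shift by (simp add: matrix_mult_sum matpow_Suc)
  then show ?case
    using Suc.IH by (simp add: matpow_Suc matrix_vector_mult_diff_distrib
        matrix_vector_mul_assoc matrix_vector_mult_add_rdistrib)
qed simp

lemma psd_matpow:
  fixes W :: "real^'n^'n"
  assumes sym: "transpose W = W" and psd: "\<And>v. 0 \<le> v \<bullet> (W *v v)"
  shows "0 \<le> v \<bullet> (matpow W t *v v)"
proof -
  have sym_pow: "transpose (matpow W s) = matpow W s" for s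
    by (simp add: transpose_matpow sym)
  obtain s where "t = s + s \<or> t = s + (1 + s)"
    by (metis add.commute add.left_commute evenE mult_2 oddE)
  then show ?thesis
  proof
    assume "t = s + s"
    then have "v \<bullet> (matpow W t *v v) = (matpow W s *v v) \<bullet> (matpow W s *v v)"
      by (simp add: matpow_add matrix_vector_mul_assoc[symmetric]
          inner_matrix_vector_symmetric[OF sym_pow])
    then show ?thesis by simp
  next
    assume "t = s + (1 + s)"
    then have "matpow W t = matpow W s ** (W ** matpow W s)"
      by (simp only: matpow_add) (simp add: matpow_Suc)
    then have "v \<bullet> (matpow W t *v v) = (matpow W s *v v) \<bullet> (W *v (matpow W s *v v))"
      by (simp add: matrix_vector_mul_assoc[symmetric] inner_matrix_vector_symmetric[OF sym_pow])
    then show ?thesis using psd by simp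
  qed
qed

lemma inner_le_inner_sum_matpow:
  fixes W :: "real^'n^'n"
  assumes "transpose W = W" and "\<And>v. 0 \<le> v \<bullet> (W *v v)" and "T \<ge> 1"
  shows "v \<bullet> v \<le> v \<bullet> ((\<Sum>t<T. matpow W t) *v v)"
proof -
  obtain T' where T: "T = Suc T'" using \<open>T \<ge> 1\<close> by (cases T) auto
  have "v \<bullet> ((\<Sum>t<T. matpow W t) *v v) = v \<bullet> v + (\<Sum>t<T'. v \<bullet> (matpow W (Suc t) *v v))"
    unfolding T sum.lessThan_Suc_shift by (simp add: sum_matrix_vector_mult inner_sum_right
        matrix_vector_mult_add_rdistrib inner_add_right)
  also have "\<dots> \<ge> v \<bullet> v"
    using psd_matpow[OF assms(1,2)] by (simp add: sum_nonneg)
  finally show ?thesis .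
qed

lemma invertible_if_inner_ge:
  fixes C :: "real^'n^'n"
  assumes "\<And>v. v \<bullet> v \<le> v \<bullet> (C *v v)"
  shows "invertible C"
proof -
  have "v = 0" if "C *v v = 0" for v
    using assms[of v] that by (metis inner_eq_zero_iff inner_ge_zero inner_zero_right antisym)
  then show ?thesis
    using invertible_left_inverse matrix_left_invertible_ker by blast
qed

lemma matrix_inv_left: "invertible C \<Longrightarrow> matrix_inv C ** C = mat 1"
  and matrix_inv_right: "invertible C \<Longrightarrow> C ** matrix_inv C = mat 1"
  unfolding matrix_inv_def invertible_def by (metis (mono_tags, lifting) someI_ex)+

lemma transpose_matrix_inv_symmetric:
  fixes C :: "real^'n^'n"
  assumes "invertible C" and "transpose C = C"
  shows "transpose (matrix_inv C) = matrix_inv C"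
proof -
  have "C ** transpose (matrix_inv C) = mat 1"
    by (metis assms matrix_inv_left matrix_transpose_mul transpose_mat)
  then have "matrix_inv C ** (C ** transpose (matrix_inv C)) = matrix_inv C"
    by simp
  then show ?thesis
    by (simp add: matrix_mul_assoc matrix_inv_left[OF assms(1)])
qed

lemma matrix_inv_commute:
  fixes C :: "real^'n^'n"
  assumes "invertible C" and "C ** P = P ** C"
  shows "matrix_inv C ** P = P ** matrix_inv C"
proof -
  let ?D = "matrix_inv C"
  have "?D ** P = ?D ** (P ** C) ** ?D"
    by (simp add: matrix_mul_assoc[symmetric] matrix_inv_right[OF assms(1)])
  also have "\<dots> = P ** ?D"
    by (simp add: assms(2)[symmetric] matrix_mul_assoc matrix_inv_left[OF assms(1)])
  finally show ?thesis .
qed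

lemma symmetric_matrix_inv_mult:
  fixes C P :: "real^'n^'n"
  assumes "invertible C" "transpose C = C" "transpose P = P" "C ** P = P ** C"
  shows "transpose (matrix_inv C ** P) = matrix_inv C ** P"
  by (simp add: assms matrix_transpose_mul transpose_matrix_inv_symmetric matrix_inv_commute)

lemma sum_matpow_commute: "(\<Sum>t<T. matpow W t) ** matpow W s = matpow W s ** (\<Sum>t<T. matpow W t)"
  by (simp add: sum_matrix_mult matrix_mult_sum matpow_commute)

section \<open>Rayleigh quotient and largest eigenvalue\<close>

lemma finite_eigenvalues_symmetric:
  fixes B :: "real^'n^'n"
  assumes sym: "transpose B = B"
  shows "finite {l. \<exists>v. v \<noteq> 0 \<and> B *v v = l *\<^sub>R v}"
proof -
  define E where "E = {l. \<exists>v. v \<noteq> 0 \<and> B *v v = l *\<^sub>R v}"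
  define ev where "ev l = (SOME v. v \<noteq> 0 \<and> B *v v = l *\<^sub>R v)" for l
  have ev: "ev l \<noteq> 0 \<and> B *v ev l = l *\<^sub>R ev l" if "l \<in> E" for l
    using that unfolding ev_def E_def by (metis (mono_tags, lifting) mem_Collect_eq someI_ex)
  have inj: "inj_on ev E"
  proof (rule inj_onI)
    fix a b assume a: "a \<in> E" and b: "b \<in> E" and "ev a = ev b"
    then have "a *\<^sub>R ev a = b *\<^sub>R ev a" using ev[OF a] ev[OF b] by metis
    then have "(a - b) *\<^sub>R ev a = 0" by (simp add: algebra_simps)
    then show "a = b" using ev[OF a] by simp
  qed
  have "pairwise orthogonal (ev ` E)"
  proof (clarsimp simp: pairwise_def orthogonal_def)
    fix a b assume a: "a \<in> E" and b: "b \<in> E" and "ev a \<noteq> ev b"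
    then have "a \<noteq> b" by auto
    have "b * (ev a \<bullet> ev b) = a * (ev a \<bullet> ev b)"
      using inner_matrix_vector_symmetric[OF sym, of "ev a" "ev b"] ev[OF a] ev[OF b] by simp
    then show "ev a \<bullet> ev b = 0" using \<open>a \<noteq> b\<close> by auto
  qed
  moreover have "0 \<notin> ev ` E" using ev by auto
  ultimately have "independent (ev ` E)" using pairwise_orthogonal_independent by blast
  then have "finite (ev ` E)" using independent_bound by blast
  then have "finite E" using inj finite_imageD by blast
  then show ?thesis by (simp add: E_def)
qed

lemma quadratic_nonpos_imp_linear_coeff_zero:
  fixes a c :: real
  assumes "\<And>t. 2 * t * a + t\<^sup>2 * c \<le> 0"
  shows "a = 0"
proof (rule ccontr)
  assume "a \<noteq> 0"
  define k where "k = \<bar>c\<bar> + 1"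
  define t where "t = a / k"
  have "k > 0" by (simp add: k_def)
  have "0 < a\<^sup>2 * (k + 1) / k\<^sup>2" using \<open>a \<noteq> 0\<close> \<open>k > 0\<close> by simp
  also have "\<dots> = 2 * t * a - t\<^sup>2 * (k - 1)"
    unfolding t_def using \<open>k > 0\<close> by (simp add: field_simps power2_eq_square)
  also have "\<dots> \<le> 2 * t * a + t\<^sup>2 * c"
    using mult_left_mono[of "- \<bar>c\<bar>" c "t\<^sup>2"] by (simp add: k_def)
  finally show False using assms[of t] by linarith
qed

lemma rayleigh_maximizer_is_eigenvector:
  fixes B :: "real^'n^'n"
  assumes sym: "transpose B = B"
    and max: "\<And>u. u \<bullet> (B *v u) \<le> \<mu> * (u \<bullet> u)"
    and attained: "u0 \<bullet> (B *v u0) = \<mu> * (u0 \<bullet> u0)"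
  shows "B *v u0 = \<mu> *\<^sub>R u0"
proof -
  define r where "r = B *v u0 - \<mu> *\<^sub>R u0"
  have "r \<bullet> r = 0"
  proof (rule quadratic_nonpos_imp_linear_coeff_zero)
    fix t :: real
    let ?u = "u0 + t *\<^sub>R r"
    have "?u \<bullet> (B *v ?u) - \<mu> * (?u \<bullet> ?u)
        = 2 * t * (r \<bullet> r) + t\<^sup>2 * (r \<bullet> (B *v r) - \<mu> * (r \<bullet> r))"
      using attained inner_matrix_vector_symmetric[OF sym, of u0 r]
      by (simp add: r_def algebra_simps inner_commute power2_eq_square matrix_vector_mult_scaleR)
    then show "2 * t * (r \<bullet> r) + t\<^sup>2 * (r \<bullet> (B *v r) - \<mu> * (r \<bullet> r)) \<le> 0"
      using max[of ?u] by linarith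
  qed
  then show ?thesis by (simp add: r_def)
qed

lemma inner_matrix_le_largest_eig:
  fixes B :: "real^'n^'n"
  assumes sym: "transpose B = B"
  shows "u \<bullet> (B *v u) \<le> largest_eig B * (u \<bullet> u)"
proof -
  define q where "q u = u \<bullet> (B *v u)" for u :: "real^'n"
  have "continuous_on (sphere 0 1) q"
    unfolding q_def by (intro continuous_intros linear_continuous_on bounded_linear_intros)
  moreover have "sphere (0::real^'n) 1 \<noteq> {}"
    using sphere_eq_empty by simp
  ultimately obtain u0 where u0: "u0 \<in> sphere 0 1" and max: "\<And>u. u \<in> sphere 0 1 \<Longrightarrow> q u \<le> q u0"
    using continuous_attains_sup[OF compact_sphere] by blast
  define \<mu> where "\<mu> = q u0"
  have bound: "q u \<le> \<mu> * (u \<bullet> u)" for u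
  proof (cases "u = 0")
    case False
    then have "q ((1 / norm u) *\<^sub>R u) \<le> \<mu>" using max by (simp add: \<mu>_def)
    then show ?thesis using False
      by (simp add: q_def matrix_vector_mult_scaleR dot_square_norm field_simps power2_eq_square)
  qed (simp add: q_def)
  have "u0 \<bullet> u0 = 1" using u0 by (simp add: dot_square_norm)
  then have "B *v u0 = \<mu> *\<^sub>R u0"
    using rayleigh_maximizer_is_eigenvector[OF sym] bound by (simp add: q_def \<mu>_def)
  moreover have "u0 \<noteq> 0" using u0 by auto
  ultimately have "\<mu> \<le> largest_eig B"
    unfolding largest_eig_def using finite_eigenvalues_symmetric[OF sym] by (auto intro: Max_ge)
  then have "\<mu> * (u \<bullet> u) \<le> largest_eig B * (u \<bullet> u)" by (simp add: mult_right_mono)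
  then show ?thesis using bound[of u] by (simp add: q_def)
qed

lemma psd_mat1_minus_scaleR:
  fixes B :: "real^'n^'n"
  assumes "transpose B = B" and "\<alpha> \<ge> 0" and "\<alpha> * largest_eig B \<le> 1"
  shows "0 \<le> v \<bullet> ((mat 1 - \<alpha> *\<^sub>R B) *v v)"
proof -
  have "\<alpha> * (v \<bullet> (B *v v)) \<le> \<alpha> * largest_eig B * (v \<bullet> v)"
    using inner_matrix_le_largest_eig[OF assms(1), of v] assms(2)
    by (simp add: mult_left_mono mult.assoc)
  also have "\<dots> \<le> v \<bullet> v"
    using assms(3) mult_right_mono[of _ 1 "v \<bullet> v"] by simp
  finally show ?thesis
    by (simp add: matrix_vector_mult_diff_rdistrib scaleR_matrix_vector_assoc[symmetric] inner_diff_right)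
qed

section \<open>The FlexPD-C iteration\<close>

lemma preconditioner_invertible_weight_symmetric:
  fixes B :: "real^'n^'n"
  assumes "transpose B = B" "\<alpha> > 0" "\<alpha> * largest_eig B < 1" "T \<ge> 1"
  defines "W \<equiv> mat 1 - \<alpha> *\<^sub>R B"
  defines "C \<equiv> \<Sum>t<T. matpow W t"
  shows "invertible C"
    and "transpose (matrix_inv C ** matpow W T) = matrix_inv C ** matpow W T"
proof -
  have W_sym: "transpose W = W"
    by (simp add: W_def transpose_diff transpose_scalar assms(1))
  have "0 \<le> v \<bullet> (W *v v)" for v
    unfolding W_def using assms(1-3) by (intro psd_mat1_minus_scaleR) auto
  then show C_inv: "invertible C"
    unfolding C_def using inner_le_inner_sum_matpow[OF W_sym _ assms(4)]
    by (intro invertible_if_inner_ge) blast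
  show "transpose (matrix_inv C ** matpow W T) = matrix_inv C ** matpow W T"
    by (rule symmetric_matrix_inv_mult[OF C_inv])
      (simp_all add: C_def transpose_sum transpose_matpow W_sym sum_matpow_commute)
qed

lemma flexpd_Suc_closed_form:
  assumes "flexpd g A B \<alpha> \<beta> T x0 k = (x, l)"
  shows "fst (flexpd g A B \<alpha> \<beta> T x0 (Suc k)) =
           matpow (mat 1 - \<alpha> *\<^sub>R B) T *v x
           - \<alpha> *\<^sub>R ((\<Sum>t<T. matpow (mat 1 - \<alpha> *\<^sub>R B) t) *v (g x + transpose A *v l))"
      (is ?primal)
    and "snd (flexpd g A B \<alpha> \<beta> T x0 (Suc k)) =
           l + \<beta> *\<^sub>R (A *v fst (flexpd g A B \<alpha> \<beta> T x0 (Suc k)))"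
      (is ?dual)
proof -
  have "(\<lambda>z. z - \<alpha> *\<^sub>R g x - \<alpha> *\<^sub>R (transpose A *v l) - \<alpha> *\<^sub>R (B *v z))
      = (\<lambda>z. (mat 1 - \<alpha> *\<^sub>R B) *v z - \<alpha> *\<^sub>R (g x + transpose A *v l))"
    by (simp add: fun_eq_iff matrix_vector_mult_diff_rdistrib scaleR_matrix_vector_assoc[symmetric]
        algebra_simps)
  then show ?primal
    using assms by (simp add: funpow_affine_closed_form matrix_vector_mult_scaleR)
  show ?dual
    using assms by (simp add: Let_def)
qed

section \<open>Strong monotonicity and Lipschitz continuity of the gradient\<close>

lemma mean_value_secant:
  fixes F F' :: "real \<Rightarrow> real"
  assumes "\<And>y. (F has_real_derivative F' y) (at y)"
  obtains z where "F a - F b = (a - b) * F' z"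
proof -
  consider "a < b" | "a = b" | "b < a" by linarith
  then have "\<exists>z. F a - F b = (a - b) * F' z"
  proof cases
    case 1
    then show ?thesis using MVT2[of a b F F'] assms by (metis minus_diff_eq mult_minus_left)
  next
    case 3
    then show ?thesis using MVT2[of b a F F'] assms by metis
  qed simp
  then show ?thesis using that by blast
qed

lemma deriv_bounds_secant:
  fixes F F' :: "real \<Rightarrow> real"
  assumes "\<And>y. (F has_real_derivative F' y) (at y)"
    and lo: "\<And>y. m \<le> F' y" and hi: "\<And>y. F' y \<le> L" and "0 \<le> m"
  shows "m * (a - b)\<^sup>2 \<le> (F a - F b) * (a - b)"
    and "(F a - F b)\<^sup>2 \<le> L\<^sup>2 * (a - b)\<^sup>2"
proof -
  obtain z where z: "F a - F b = (a - b) * F' z"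
    using mean_value_secant assms(1) by blast
  show "m * (a - b)\<^sup>2 \<le> (F a - F b) * (a - b)"
    using mult_right_mono[OF lo[of z], of "(a - b)\<^sup>2"] by (simp add: z power2_eq_square ac_simps)
  have "(F' z)\<^sup>2 \<le> L\<^sup>2"
    using lo[of z] hi[of z] \<open>0 \<le> m\<close> by (intro power_mono) auto
  then show "(F a - F b)\<^sup>2 \<le> L\<^sup>2 * (a - b)\<^sup>2"
    by (simp add: z power_mult_distrib mult_right_mono mult.commute)
qed

lemma grad_strongly_monotone:
  assumes "\<And>i y. (f' i has_real_derivative f'' i y) (at y)"
    and "\<And>i y. m \<le> f'' i y" and "\<And>i y. f'' i y \<le> L" and "0 \<le> m"
  shows "m * (norm (u - w))\<^sup>2 \<le> (grad f' u - grad f' w) \<bullet> (u - w)"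
  unfolding power2_norm_eq_inner inner_vec_def grad_def sum_distrib_left
  using deriv_bounds_secant(1)[OF assms] by (intro sum_mono) (simp add: power2_eq_square)

lemma grad_lipschitz:
  assumes "\<And>i y. (f' i has_real_derivative f'' i y) (at y)"
    and "\<And>i y. m \<le> f'' i y" and "\<And>i y. f'' i y \<le> L" and "0 \<le> m"
  shows "norm (grad f' u - grad f' w) \<le> L * norm (u - w)"
proof (rule power2_le_imp_le)
  show "(norm (grad f' u - grad f' w))\<^sup>2 \<le> (L * norm (u - w))\<^sup>2"
    unfolding power_mult_distrib power2_norm_eq_inner inner_vec_def grad_def sum_distrib_left
    using deriv_bounds_secant(2)[OF assms] by (intro sum_mono) (simp add: power2_eq_square)
  show "0 \<le> L * norm (u - w)"
    using assms(2,3,4) order_trans by (metis mult_nonneg_nonneg norm_ge_zero)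
qed

lemma inner_gradient_lower_bound:
  fixes G :: "'a::real_inner \<Rightarrow> 'a"
  assumes mono: "m * (norm (y - z))\<^sup>2 \<le> (G y - G z) \<bullet> (y - z)"
    and lip: "norm (G x - G y) \<le> L * norm (x - y)"
    and "\<eta> > 0"
  shows "(2 * m - \<eta>) * (norm (y - z))\<^sup>2 - L\<^sup>2 / \<eta> * (norm (y - x))\<^sup>2
           \<le> 2 * ((y - z) \<bullet> (G x - G z))"
proof -
  let ?e = "y - z" and ?r = "G x - G y"
  \<comment> \<open>Young's inequality with weight \<open>\<eta>\<close>\<close>
  have "0 \<le> (\<eta> *\<^sub>R ?e + ?r) \<bullet> (\<eta> *\<^sub>R ?e + ?r)"
    by simp
  also have "\<dots> = \<eta> * (\<eta> * (norm ?e)\<^sup>2 + 2 * (?e \<bullet> ?r)) + (norm ?r)\<^sup>2"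
    by (simp add: dot_square_norm[symmetric] inner_add_left inner_add_right inner_commute
        algebra_simps)
  finally have "- 2 * (?e \<bullet> ?r) * \<eta> \<le> \<eta> * (norm ?e)\<^sup>2 * \<eta> + (norm ?r)\<^sup>2"
    by (simp add: algebra_simps)
  then have young: "- 2 * (?e \<bullet> ?r) \<le> \<eta> * (norm ?e)\<^sup>2 + (norm ?r)\<^sup>2 / \<eta>"
    using \<open>\<eta> > 0\<close> by (simp add: field_simps)
  have "(norm ?r)\<^sup>2 \<le> L\<^sup>2 * (norm (y - x))\<^sup>2"
    using lip by (metis norm_ge_zero norm_minus_commute power_mono power_mult_distrib)
  then have "(norm ?r)\<^sup>2 / \<eta> \<le> L\<^sup>2 / \<eta> * (norm (y - x))\<^sup>2"
    using \<open>\<eta> > 0\<close> by (simp add: divide_right_mono)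
  moreover have "?e \<bullet> (G x - G z) = (G y - G z) \<bullet> ?e + ?e \<bullet> ?r"
    by (simp add: inner_diff_right inner_commute)
  ultimately show ?thesis
    using mono young by (simp add: algebra_simps)
qed

section \<open>One-step descent inequality\<close>

lemma sqnorm_add: "sqnorm (X + Y) v = sqnorm X v + sqnorm Y v"
  by (simp add: sqnorm_def matrix_vector_mult_add_rdistrib inner_add_right)

lemma sqnorm_diff: "sqnorm (X - Y) v = sqnorm X v - sqnorm Y v"
  by (simp add: sqnorm_def matrix_vector_mult_diff_rdistrib inner_diff_right)

lemma sqnorm_scaleR: "sqnorm (c *\<^sub>R X) v = c * sqnorm X v"
  by (simp add: sqnorm_def scaleR_matrix_vector_assoc[symmetric])

lemma sqnorm_mat1: "sqnorm (mat 1) v = (norm v)\<^sup>2"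
  by (simp add: sqnorm_def power2_norm_eq_inner)

lemma inner_transpose_matrix_vector: "x \<bullet> (transpose A *v y) = (A *v x) \<bullet> (y :: real^'m)"
  by (metis dot_lmul_matrix inner_commute transpose_matrix_vector)

lemma sqnorm_transpose_mult_self: "sqnorm (transpose A ** A) v = (norm (A *v v))\<^sup>2"
  unfolding sqnorm_def matrix_vector_mul_assoc[symmetric] inner_transpose_matrix_vector
  by (simp add: power2_norm_eq_inner)

lemma sqnorm_diff_symmetric:
  assumes "transpose M = M"
  shows "sqnorm M (u - v) = sqnorm M u - 2 * (u \<bullet> (M *v v)) + sqnorm M v"
  using inner_matrix_vector_symmetric[OF assms, of v u]
  by (simp add: sqnorm_def matrix_vector_mult_diff_distrib inner_diff_left inner_diff_right
      inner_commute)

lemma primal_dual_step_error_identity: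
  fixes A :: "real^'n^'e" and D M :: "real^'n^'n"
  assumes M_sym: "transpose M = M"
    and step: "D *v x' = M *v x - \<alpha> *\<^sub>R (g + transpose A *v l)"
    and fixed: "D *v xs = M *v xs - \<alpha> *\<^sub>R (gs + transpose A *v ls)"
    and dual: "l' = l + \<beta> *\<^sub>R (A *v x')"
    and feas: "A *v xs = 0"
    and "\<beta> \<noteq> 0"
  shows "2 * sqnorm (D - M) (x' - xs) - \<alpha> * \<beta> * (norm (A *v (x' - xs)))\<^sup>2
           + sqnorm M (x' - x)
         = sqnorm M (x - xs) - sqnorm M (x' - xs) + \<alpha> / \<beta> * ((norm (l - ls))\<^sup>2 - (norm (l' - ls))\<^sup>2)
           - 2 * \<alpha> * ((x' - xs) \<bullet> (g - gs))"
proof -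
  define e where "e = x' - xs"
  define d where "d = x' - x"
  define p where "p = l - ls"
  have "(D - M) *v e + M *v d = - \<alpha> *\<^sub>R (g - gs) - \<alpha> *\<^sub>R (transpose A *v p)"
  proof -
    have "(D - M) *v e + M *v d = (D *v x' - M *v x) - (D *v xs - M *v xs)"
      by (simp add: e_def d_def matrix_vector_mult_diff_distrib matrix_vector_mult_diff_rdistrib)
    then show ?thesis
      unfolding step fixed by (simp add: p_def matrix_vector_mult_diff_distrib algebra_simps)
  qed
  then have "e \<bullet> ((D - M) *v e + M *v d) = e \<bullet> (- \<alpha> *\<^sub>R (g - gs) - \<alpha> *\<^sub>R (transpose A *v p))"
    by simp
  then have error: "sqnorm (D - M) e + e \<bullet> (M *v d) = - \<alpha> * (e \<bullet> (g - gs)) - \<alpha> * ((A *v e) \<bullet> p)"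
    unfolding sqnorm_def inner_add_right inner_diff_right inner_scaleR_right
      inner_transpose_matrix_vector by simp
  have primal: "sqnorm M (x - xs) = sqnorm M e - 2 * (e \<bullet> (M *v d)) + sqnorm M d"
    using sqnorm_diff_symmetric[OF M_sym, of e d] by (simp add: e_def d_def)
  have "l' - ls = p + \<beta> *\<^sub>R (A *v e)"
    using dual feas by (simp add: p_def e_def matrix_vector_mult_diff_distrib)
  then have "(norm (l' - ls))\<^sup>2 = (norm p)\<^sup>2 + 2 * \<beta> * ((A *v e) \<bullet> p) + \<beta>\<^sup>2 * (norm (A *v e))\<^sup>2"
    unfolding power2_norm_eq_inner
    by (simp add: inner_add_left inner_add_right inner_commute power2_eq_square algebra_simps)
  then have dual_gap: "\<alpha> / \<beta> * ((norm p)\<^sup>2 - (norm (l' - ls))\<^sup>2)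
      = - 2 * \<alpha> * ((A *v e) \<bullet> p) - \<alpha> * \<beta> * (norm (A *v e))\<^sup>2"
    using \<open>\<beta> \<noteq> 0\<close> by (simp add: field_simps power2_eq_square)
  show ?thesis
    using error primal dual_gap by (simp add: e_def[symmetric] d_def[symmetric] p_def[symmetric])
qed

lemma primal_dual_step_descent:
  fixes A :: "real^'n^'e" and D M :: "real^'n^'n" and G :: "real^'n \<Rightarrow> real^'n"
  assumes M_sym: "transpose M = M"
    and step: "D *v x' = M *v x - \<alpha> *\<^sub>R (G x + transpose A *v l)"
    and fixed: "D *v xs = M *v xs - \<alpha> *\<^sub>R (G xs + transpose A *v ls)"
    and dual: "l' = l + \<beta> *\<^sub>R (A *v x')"
    and feas: "A *v xs = 0"
    and mono: "m * (norm (x' - xs))\<^sup>2 \<le> (G x' - G xs) \<bullet> (x' - xs)"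
    and lip: "norm (G x - G x') \<le> L * norm (x - x')"
    and "\<alpha> > 0" "\<beta> > 0" "\<eta> > 0"
  shows "sqnorm ((2 * \<alpha> * m) *\<^sub>R mat 1 - (\<alpha> * \<eta>) *\<^sub>R mat 1 + (2 * \<alpha>) *\<^sub>R ((1 / \<alpha>) *\<^sub>R (D - M))
                   - (\<alpha> * \<beta>) *\<^sub>R (transpose A ** A)) (x' - xs)
         + sqnorm (M - (\<alpha> * L\<^sup>2 / \<eta>) *\<^sub>R mat 1) (x' - x)
       \<le> sqnorm M (x - xs) - sqnorm M (x' - xs) + \<alpha> / \<beta> * ((norm (l - ls))\<^sup>2 - (norm (l' - ls))\<^sup>2)"
proof -
  have gradient: "(2 * \<alpha> * m - \<alpha> * \<eta>) * (norm (x' - xs))\<^sup>2 - \<alpha> * L\<^sup>2 / \<eta> * (norm (x' - x))\<^sup>2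
      \<le> 2 * \<alpha> * ((x' - xs) \<bullet> (G x - G xs))"
    using mult_left_mono[OF inner_gradient_lower_bound[OF mono lip \<open>\<eta> > 0\<close>], of \<alpha>] \<open>\<alpha> > 0\<close>
    by (simp add: algebra_simps)
  have "sqnorm ((2 * \<alpha> * m) *\<^sub>R mat 1 - (\<alpha> * \<eta>) *\<^sub>R mat 1 + (2 * \<alpha>) *\<^sub>R ((1 / \<alpha>) *\<^sub>R (D - M))
                   - (\<alpha> * \<beta>) *\<^sub>R (transpose A ** A)) (x' - xs)
      = (2 * \<alpha> * m - \<alpha> * \<eta>) * (norm (x' - xs))\<^sup>2 + 2 * sqnorm (D - M) (x' - xs)
        - \<alpha> * \<beta> * (norm (A *v (x' - xs)))\<^sup>2"
    using \<open>\<alpha> > 0\<close>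
    by (simp add: sqnorm_add sqnorm_diff sqnorm_scaleR sqnorm_mat1 sqnorm_transpose_mult_self
        algebra_simps)
  moreover have "sqnorm (M - (\<alpha> * L\<^sup>2 / \<eta>) *\<^sub>R mat 1) (x' - x)
      = sqnorm M (x' - x) - \<alpha> * L\<^sup>2 / \<eta> * (norm (x' - x))\<^sup>2"
    by (simp add: sqnorm_diff sqnorm_scaleR sqnorm_mat1)
  ultimately show ?thesis
    using primal_dual_step_error_identity[OF M_sym step fixed dual feas] \<open>\<beta> > 0\<close> gradient by simp
qed

theorem lemma3p16:
  fixes src dst :: "'e::finite \<Rightarrow> 'n::finite"
    and f f' f'' :: "'n \<Rightarrow> real \<Rightarrow> real"
    and m L :: real
    and B :: "real^'n^'n"
    and xs :: "real^'n" and ls :: "real^'e"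
    and \<alpha> \<beta> \<eta>4 :: real and T :: nat and x0 :: "real^'n"
  assumes graph: "simple_graph src dst" "connected_graph src dst"
    and deriv1: "\<And>i y. (f i has_real_derivative f' i y) (at y)"
    and deriv2: "\<And>i y. (f' i has_real_derivative f'' i y) (at y)"
    and bounds: "0 < m" "m \<le> L" "\<And>i y. m \<le> f'' i y" "\<And>i y. f'' i y \<le> L"
    and B_sym: "transpose B = B"
    and B_psd: "\<And>v. 0 \<le> v \<bullet> (B *v v)"
    and B_null: "\<And>v. B *v v = 0 \<longleftrightarrow> incidence src dst *v v = 0"
    and B_sparse: "\<And>i j. i \<noteq> j \<Longrightarrow> B $ i $ j \<noteq> 0 \<Longrightarrow> adjacent src dst i j"
    and xs_feas: "incidence src dst *v xs = 0"
    and xs_min: "\<And>x. incidence src dst *v x = 0 \<Longrightarrow>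
                   (\<Sum>i\<in>UNIV. f i (xs $ i)) \<le> (\<Sum>i\<in>UNIV. f i (x $ i))"
    and KKT: "grad f' xs + transpose (incidence src dst) *v ls = 0"
    and Bxs: "B *v xs = 0"
    and ls_range: "ls \<in> range (\<lambda>y. incidence src dst *v y)"
    and params: "\<beta> > 0" "T \<ge> 1" "\<alpha> > 0" "\<alpha> * largest_eig B < 1" "\<eta>4 > 0"
  shows
    "let A = incidence src dst;
         I = (mat 1 :: real^'n^'n);
         C = (\<Sum>t<T. matpow (I - \<alpha> *\<^sub>R B) t);
         M = matrix_inv C ** matpow (I - \<alpha> *\<^sub>R B) T;
         N = (1 / \<alpha>) *\<^sub>R (matrix_inv C - M);
         PC = (2 * \<alpha> * m) *\<^sub>R I - (\<alpha> * \<eta>4) *\<^sub>R I + (2 * \<alpha>) *\<^sub>R N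
                - (\<alpha> * \<beta>) *\<^sub>R (transpose A ** A);
         QC = M - (\<alpha> * L\<^sup>2 / \<eta>4) *\<^sub>R I;
         it = flexpd (grad f') A B \<alpha> \<beta> T x0;
         x = (\<lambda>k. fst (it k));
         l = (\<lambda>k. snd (it k))
     in \<forall>k. sqnorm PC (x (Suc k) - xs) + sqnorm QC (x (Suc k) - x k)
            \<le> sqnorm M (x k - xs) - sqnorm M (x (Suc k) - xs)
              + (\<alpha> / \<beta>) * ((norm (l k - ls))\<^sup>2 - (norm (l (Suc k) - ls))\<^sup>2)"
proof -
  \<comment> \<open>Only symmetry of \<open>B\<close>, \<open>\<alpha> \<rho>(B) < 1\<close>, \<open>B x\<^sup>* = 0\<close>, feasibility of \<open>x\<^sup>*\<close> and the
     KKT equation are needed; the graph hypotheses and the optimality of \<open>x\<^sup>*\<close> are not.\<close>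
  let ?A = "incidence src dst" and ?W = "mat 1 - \<alpha> *\<^sub>R B"
  let ?C = "\<Sum>t<T. matpow ?W t"
  let ?M = "matrix_inv ?C ** matpow ?W T"
  let ?PC = "(2 * \<alpha> * m) *\<^sub>R mat 1 - (\<alpha> * \<eta>4) *\<^sub>R mat 1
    + (2 * \<alpha>) *\<^sub>R ((1 / \<alpha>) *\<^sub>R (matrix_inv ?C - ?M)) - (\<alpha> * \<beta>) *\<^sub>R (transpose ?A ** ?A)"
  let ?QC = "?M - (\<alpha> * L\<^sup>2 / \<eta>4) *\<^sub>R mat 1"
  let ?x = "\<lambda>k. fst (flexpd (grad f') ?A B \<alpha> \<beta> T x0 k)"
  let ?l = "\<lambda>k. snd (flexpd (grad f') ?A B \<alpha> \<beta> T x0 k)"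
  have C_inv: "invertible ?C" and M_sym: "transpose ?M = ?M"
    using preconditioner_invertible_weight_symmetric[OF B_sym] params by auto
  have fixed: "matrix_inv ?C *v xs = ?M *v xs - \<alpha> *\<^sub>R (grad f' xs + transpose ?A *v ls)"
  proof -
    have "?W *v xs = xs"
      using Bxs by (simp add: matrix_vector_mult_diff_rdistrib scaleR_matrix_vector_assoc[symmetric])
    then show ?thesis
      using KKT by (simp add: matpow_fixed_vector matrix_vector_mul_assoc[symmetric])
  qed
  have mono: "m * (norm (u - xs))\<^sup>2 \<le> (grad f' u - grad f' xs) \<bullet> (u - xs)" for u
    using grad_strongly_monotone[OF deriv2 bounds(3,4)] bounds(1) by simp
  have lip: "norm (grad f' u - grad f' w) \<le> L * norm (u - w)" for u w
    using grad_lipschitz[OF deriv2 bounds(3,4)] bounds(1) by simp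
  show ?thesis
    unfolding Let_def
  proof
    fix k
    obtain x l where it: "flexpd (grad f') ?A B \<alpha> \<beta> T x0 k = (x, l)" by fastforce
    note next_iterate = flexpd_Suc_closed_form[OF it]
    have step: "matrix_inv ?C *v ?x (Suc k)
        = ?M *v x - \<alpha> *\<^sub>R (grad f' x + transpose ?A *v l)"
      unfolding next_iterate(1)
      by (simp add: matrix_vector_mult_diff_distrib matrix_vector_mult_scaleR matrix_vector_mul_assoc
          matrix_inv_left[OF C_inv])
    show "sqnorm ?PC (?x (Suc k) - xs) + sqnorm ?QC (?x (Suc k) - ?x k)
        \<le> sqnorm ?M (?x k - xs) - sqnorm ?M (?x (Suc k) - xs)
          + \<alpha> / \<beta> * ((norm (?l k - ls))\<^sup>2 - (norm (?l (Suc k) - ls))\<^sup>2)"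
      using primal_dual_step_descent[OF M_sym step fixed next_iterate(2) xs_feas mono lip] params
      by (simp add: it)
  qed
qed

end
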